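(* Let $Z$ be a non-degenerate max-stable random variable (i.e. $Z$ arises as a non-degenerate limit in distribution of $a_n\max\{X_1,\dots,X_n\}-b_n$ for some i.i.d. sequence $X_1,X_2,\dots$ and constants $a_n>0$, $b_n\in\mathbb{R}$). Then $Z\in\mathcal{D}^-$ if and only if $Z$ is, up to a transformation $z\mapsto az+b$ with $a>0$, $b\in\mathbb{R}$, a Fréchet distribution with distribution function $F(x)=e^{-x^{-\alpha}}$, $x>0$, with parameter $0<\alpha\le1$.
   Context: For real random variables, $X \le_{st} Y$ means $P(X\le t)\ge P(Y\le t)$ for all $t\in\mathbb{R}$. A real random variable $X$ (equivalently its distribution function $F_X$) belongs to $\mathcal{D}^-$ if for every $n\in\mathbb{N}$, all $\theta_1,\dots,\theta_n\ge 0$ with $\sum_{i=1}^n\theta_i=1$, and i.i.d. random variables $X_1,\dots,X_n$ with distribution $F_X$, we have $X_1\le_{st}\sum_{i=1}^n\theta_iX_i$. *)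

theory Defs
  imports "HOL-Probability.Probability"
begin

definition stoch_le :: "real measure \<Rightarrow> real measure \<Rightarrow> bool" where
  "stoch_le X Y \<longleftrightarrow> (\<forall>t. cdf X t \<ge> cdf Y t)"

text \<open>The class D^-: for i.i.d. X_1,...,X_n with distribution M (modelled canonically
  by the product measure), X_1 \<le>st sum theta_i X_i.  Indices are 0..n-1.\<close>
definition D_minus :: "real measure \<Rightarrow> bool" where
  "D_minus M \<longleftrightarrow>
     (\<forall>(n::nat) (\<theta>::nat \<Rightarrow> real).
        (\<forall>i<n. \<theta> i \<ge> 0) \<and> (\<Sum>i<n. \<theta> i) = 1 \<longrightarrow>
        stoch_le M (distr (PiM {..<n} (\<lambda>_. M)) borel (\<lambda>x. \<Sum>i<n. \<theta> i * x i)))"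

definition nondegenerate :: "real measure \<Rightarrow> bool" where
  "nondegenerate Z \<longleftrightarrow> (\<forall>c. measure Z {c} < 1)"

text \<open>Max-stable: non-degenerate weak limit of a_n max(X_1..X_n) - b_n for i.i.d. X_i
  with distribution N; the sequence index n corresponds to n+1 variables.\<close>
definition max_stable :: "real measure \<Rightarrow> bool" where
  "max_stable Z \<longleftrightarrow> real_distribution Z \<and> nondegenerate Z \<and>
     (\<exists>N (a::nat \<Rightarrow> real) (b::nat \<Rightarrow> real). real_distribution N \<and> (\<forall>n. a n > 0) \<and>
        weak_conv_m
          (\<lambda>n. distr (PiM {..<Suc n} (\<lambda>_. N)) borel
                 (\<lambda>x. a n * Max (x ` {..<Suc n}) - b n)) Z)"

definition frechet_cdf :: "real \<Rightarrow> real \<Rightarrow> real" where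
  "frechet_cdf \<alpha> x = (if x > 0 then exp (- (x powr (- \<alpha>))) else 0)"

end

theory Submission
  imports Defs
begin

text \<open>Let \<open>G\<close> be the distribution function of \<open>Z\<close>. Max-stability gives, for every \<open>t > 0\<close>, an affine
  map with \<open>G(y)\<^sup>t = G(A y + B)\<close>: maxima of about \<open>t n\<close> and of \<open>n\<close> variables, suitably normalised,
  converge to \<open>G\<^sup>t\<close> and to \<open>G\<close>, and convergence of types relates the two normalisations.
  Membership in \<open>D\<^sup>-\<close> with weights \<open>1/2, 1/2\<close> gives the tail bound
  \<open>1 - G t \<le> 2 (1 - G u) + (1 - G w)\<^sup>2\<close> whenever \<open>u + w \<le> 2 t\<close>.
  For \<open>t = 2\<close> the affine map is a shift (Gumbel type), an expansion around a fixed point \<open>p\<close>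
  with \<open>G p = 1\<close> (Weibull type), or a contraction around \<open>p\<close> with \<open>G p = 0\<close>; the first two
  contradict the tail bound. In the last case the maps for all \<open>t\<close> fix \<open>p\<close>, so \<open>-ln G(p + s)\<close>
  is a power law and \<open>G\<close> is Frechet, and the tail bound forces \<open>\<alpha> \<le> 1\<close>.
  Conversely, for a Frechet law with \<open>\<alpha> \<le> 1\<close>, the event \<open>\<Sum>\<theta>\<^sub>i X\<^sub>i \<le> t\<close> lies almost surely in
  the box \<open>X\<^sub>i \<le> b + (t - b) / \<theta>\<^sub>i\<close>, whose probability \<open>exp (- v \<Sum>\<theta>\<^sub>i\<^sup>\<alpha>)\<close> is at most
  \<open>exp (- v) = G t\<close> because \<open>\<theta>\<^sup>\<alpha> \<ge> \<theta>\<close>.\<close>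

section \<open>Finite powers of a probability space\<close>

lemma measure_PiM_box:
  assumes "prob_space M" "finite I" "\<And>i. i \<in> I \<Longrightarrow> A i \<in> sets M"
  shows "measure (PiM I (\<lambda>_. M)) {x \<in> space (PiM I (\<lambda>_. M)). \<forall>i\<in>I. x i \<in> A i}
           = (\<Prod>i\<in>I. measure M (A i))"
proof -
  interpret product_prob_space "\<lambda>_. M" I
    using assms(1) by (simp add: product_prob_space_def product_sigma_finite_def
        prob_space_imp_sigma_finite product_prob_space_axioms_def)
  have "{x \<in> space (PiM I (\<lambda>_. M)). \<forall>i\<in>I. x i \<in> A i} = prod_emb I (\<lambda>_. M) I (Pi\<^sub>E I A)"
    using assms unfolding prod_emb_def by (auto simp: space_PiM Pi_iff PiE_def extensional_def)
  then show ?thesis using measure_PiM_emb[of I A] assms by simp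
qed

lemma box_in_sets_PiM:
  assumes "finite I" "\<And>i. i \<in> I \<Longrightarrow> A i \<in> sets M"
  shows "{x \<in> space (PiM I (\<lambda>_. M)). \<forall>i\<in>I. x i \<in> A i} \<in> sets (PiM I (\<lambda>_. M))"
proof -
  have "{x \<in> space (PiM I (\<lambda>_. M)). \<forall>i\<in>I. x i \<in> A i} = PiE I A"
  proof -
    have "A i \<subseteq> space M" if "i \<in> I" for i
      using assms(2)[OF that] by (rule sets.sets_into_space)
    then show ?thesis by (auto simp: space_PiM PiE_iff extensional_def)
  qed
  then show ?thesis using assms by (simp add: sets_PiM_I_finite)
qed

lemma cdf_affine_Max_PiM:
  assumes "real_distribution N" "a > 0"
  shows "cdf (distr (PiM {..<Suc n} (\<lambda>_. N)) borel (\<lambda>x. a * Max (x ` {..<Suc n}) - b)) y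
        = cdf N ((y + b) / a) ^ Suc n"
proof -
  interpret N: real_distribution N by fact
  let ?P = "PiM {..<Suc n} (\<lambda>_. N)" and ?f = "\<lambda>x. a * Max (x ` {..<Suc n}) - b"
  have "?f \<in> borel_measurable ?P" by measurable
  then have "cdf (distr ?P borel ?f) y = measure ?P (?f -` {..y} \<inter> space ?P)"
    unfolding cdf_def by (simp add: measure_distr)
  also have "?f -` {..y} \<inter> space ?P = {x \<in> space ?P. \<forall>i\<in>{..<Suc n}. x i \<in> {..(y+b)/a}}"
  proof -
    have "?f x \<le> y \<longleftrightarrow> Max (x ` {..<Suc n}) \<le> (y+b)/a" for x
      using assms(2) by (simp add: field_simps)
    then show ?thesis by (subst (asm) Max_le_iff) auto
  qed
  also have "measure ?P \<dots> = (\<Prod>i\<in>{..<Suc n}. measure N {..(y+b)/a})"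
    by (rule measure_PiM_box) (auto simp: N.prob_space_axioms)
  finally show ?thesis by (simp add: cdf_def)
qed

section \<open>Nondegenerate distribution functions\<close>

definition nondeg_df :: "(real \<Rightarrow> real) \<Rightarrow> bool" where
  "nondeg_df U \<longleftrightarrow> mono U \<and> (\<forall>y. continuous (at_right y) U) \<and> (U \<longlongrightarrow> 0) at_bot \<and>
     (U \<longlongrightarrow> 1) at_top \<and> (\<exists>y. 0 < U y \<and> U y < 1)"

lemma nondeg_df_bounds:
  assumes "nondeg_df U"
  shows "0 \<le> U y" "U y \<le> 1"
proof -
  have mono: "mono U" and bot: "(U \<longlongrightarrow> 0) at_bot" and top: "(U \<longlongrightarrow> 1) at_top"
    using assms by (auto simp: nondeg_df_def)
  have "eventually (\<lambda>x. U x \<le> U y) at_bot"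
    using mono by (auto simp: eventually_at_bot_linorder mono_def)
  with bot show "0 \<le> U y" by (rule tendsto_upperbound) simp
  have "eventually (\<lambda>x. U y \<le> U x) at_top"
    using mono by (auto simp: eventually_at_top_linorder mono_def)
  with top show "U y \<le> 1" by (rule tendsto_lowerbound) simp
qed

lemma nondeg_df_not_01:
  assumes "nondeg_df U" "\<And>y. U y = 0 \<or> U y = 1"
  shows False
proof -
  obtain y where "0 < U y" "U y < 1" using assms(1) by (auto simp: nondeg_df_def)
  with assms(2)[of y] show False by auto
qed

lemma real_distribution_cdf_01_imp_atom:
  assumes "real_distribution Z" "\<And>y. cdf Z y = 0 \<or> cdf Z y = 1"
  shows "\<exists>c. measure Z {c} = 1"
proof -
  interpret Z: real_distribution Z by fact
  let ?G = "cdf Z"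
  define S where "S = {y. ?G y = 1}"
  obtain y1 where y1: "?G y1 > 1/2"
    using order_tendstoD(1)[OF Z.cdf_lim_at_top_prob, of "1/2"] by (auto simp: eventually_at_top_linorder)
  obtain y0 where y0: "\<And>y. y \<le> y0 \<Longrightarrow> ?G y < 1/2"
    using order_tendstoD(2)[OF Z.cdf_lim_at_bot, of "1/2"] by (auto simp: eventually_at_bot_linorder)
  have "y1 \<in> S" using y1 assms(2)[of y1] by (auto simp: S_def)
  have "y0 \<le> s" if "s \<in> S" for s
    using y0[of s] that by (force simp: S_def)
  then have bdd: "bdd_below S" by (rule bdd_belowI)
  define c where "c = Inf S"
  have below: "?G y = 0" if "y < c" for y
  proof -
    have "y \<notin> S" using cInf_lower[OF _ bdd] that by (force simp: c_def)
    then show ?thesis using assms(2)[of y] by (auto simp: S_def)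
  qed
  have above: "?G y = 1" if "y > c" for y
  proof -
    have "Inf S < y" using that by (simp add: c_def)
    then obtain s where "s \<in> S" "s < y"
      using cInf_less_iff[OF _ bdd] \<open>y1 \<in> S\<close> by blast
    then show ?thesis using Z.cdf_nondecreasing[of s y] Z.cdf_bounded_prob[of y] by (auto simp: S_def)
  qed
  have "(?G \<longlongrightarrow> ?G c) (at_right c)"
    using Z.cdf_is_right_cont[of c] by (simp add: continuous_within)
  moreover have "eventually (\<lambda>y. ?G y = 1) (at_right c)"
    unfolding eventually_at_right_field using above by (intro exI[of _ "c+1"]) auto
  ultimately have "((\<lambda>_. 1) \<longlongrightarrow> ?G c) (at_right c)"
    by (rule Lim_transform_eventually)
  then have Gc: "?G c = 1"
    using tendsto_unique[OF trivial_limit_at_right_real _ tendsto_const] by metis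
  have "eventually (\<lambda>y. ?G y = 0) (at_left c)"
    unfolding eventually_at_left_field using below by (intro exI[of _ "c-1"]) auto
  then have "((\<lambda>_. 0) \<longlongrightarrow> measure Z {..<c}) (at_left c)"
    using Z.cdf_at_left[of c] by (rule Lim_transform_eventually[rotated])
  then have "measure Z {..<c} = 0"
    using tendsto_unique[OF trivial_limit_at_left_real _ tendsto_const] by metis
  moreover have "measure Z {..c} = measure Z {..<c} + measure Z {c}"
    by (subst Z.finite_measure_Union[symmetric]) (auto intro!: arg_cong[where f="measure Z"])
  ultimately show ?thesis using Gc by (auto simp: cdf_def)
qed

lemma nondeg_df_cdf:
  assumes "real_distribution Z" "nondegenerate Z"
  shows "nondeg_df (cdf Z)"
proof -
  interpret Z: real_distribution Z by fact
  have "\<exists>y. 0 < cdf Z y \<and> cdf Z y < 1"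
  proof (rule ccontr)
    assume "\<not> ?thesis"
    then have "\<not> (0 < cdf Z y \<and> cdf Z y < 1)" for y by blast
    then have "cdf Z y = 0 \<or> cdf Z y = 1" for y
      using Z.cdf_nonneg[of y] Z.cdf_bounded_prob[of y] by (metis le_less)
    then obtain c where "measure Z {c} = 1"
      using real_distribution_cdf_01_imp_atom[OF assms(1)] by blast
    with assms(2) show False by (auto simp: nondegenerate_def dest: spec[of _ c])
  qed
  then show ?thesis unfolding nondeg_df_def
    using Z.cdf_is_right_cont Z.cdf_lim_at_bot Z.cdf_lim_at_top_prob
    by (auto simp: mono_def Z.cdf_nondecreasing)
qed

lemma nondeg_df_powr:
  assumes "nondeg_df G" "t > 0"
  shows "nondeg_df (\<lambda>y. G y powr t)"
proof -
  have G0: "G y \<ge> 0" for y using nondeg_df_bounds(1)[OF assms(1)] .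
  have m: "mono G" and rc: "\<And>y. continuous (at_right y) G" and b: "(G \<longlongrightarrow> 0) at_bot"
    and tp: "(G \<longlongrightarrow> 1) at_top" and nd: "\<exists>y. 0 < G y \<and> G y < 1"
    using assms(1) by (auto simp: nondeg_df_def)
  have "mono (\<lambda>y. G y powr t)" using m G0 assms(2) by (auto simp: mono_def intro!: powr_mono2)
  moreover have "continuous (at_right y) (\<lambda>y. G y powr t)" for y
    using rc[of y] unfolding continuous_within by (rule tendsto_powr') (use G0 assms(2) in auto)
  moreover have "((\<lambda>y. G y powr t) \<longlongrightarrow> 0) at_bot"
    using tendsto_powr'[OF b tendsto_const[of t]] G0 assms(2) by auto
  moreover have "((\<lambda>y. G y powr t) \<longlongrightarrow> 1) at_top"
    using tendsto_powr'[OF tp tendsto_const[of t]] assms by auto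
  moreover have "\<exists>y. 0 < G y powr t \<and> G y powr t < 1"
  proof -
    obtain y where "0 < G y" "G y < 1" using nd by blast
    then show ?thesis using powr_less_mono2[of t "G y" 1] assms(2) by (intro exI[of _ y]) auto
  qed
  ultimately show ?thesis unfolding nondeg_df_def by blast
qed

lemma mono_ex_isCont_between:
  fixes U :: "real \<Rightarrow> real"
  assumes "mono U" "a < b"
  shows "\<exists>x. a < x \<and> x < b \<and> isCont U x"
  using real_interval_avoid_countable_set[OF assms(2) mono_ctble_discont[OF assms(1)]] by auto

lemma nondeg_df_isCont_below:
  assumes "nondeg_df U" "0 < v"
  shows "\<exists>m. isCont U m \<and> U m < v"
proof -
  have mono: "mono U" and bot: "(U \<longlongrightarrow> 0) at_bot" using assms(1) by (auto simp: nondeg_df_def)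
  obtain m0 where m0: "\<And>u. u \<le> m0 \<Longrightarrow> U u < v"
    using order_tendstoD(2)[OF bot assms(2)] by (auto simp: eventually_at_bot_linorder)
  obtain m where "m0 - 1 < m" "m < m0" "isCont U m"
    using mono_ex_isCont_between[OF mono, of "m0 - 1" m0] by auto
  then show ?thesis using m0[of m] by auto
qed

lemma nondeg_df_isCont_above:
  assumes "nondeg_df U" "v < 1"
  shows "\<exists>M. isCont U M \<and> v < U M"
proof -
  have mono: "mono U" and top: "(U \<longlongrightarrow> 1) at_top" using assms(1) by (auto simp: nondeg_df_def)
  obtain M0 where M0: "\<And>u. u \<ge> M0 \<Longrightarrow> v < U u"
    using order_tendstoD(1)[OF top assms(2)] by (auto simp: eventually_at_top_linorder)
  obtain M where "M0 < M" "M < M0 + 1" "isCont U M"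
    using mono_ex_isCont_between[OF mono, of M0 "M0 + 1"] by auto
  then show ?thesis using M0[of M] by auto
qed

lemma nondeg_df_two_isCont_points:
  assumes "nondeg_df V"
  shows "\<exists>y1 y2. y1 < y2 \<and> isCont V y1 \<and> isCont V y2 \<and> 0 < V y1 \<and> V y2 < 1"
proof -
  have mono: "mono V" and rc: "continuous (at_right y) V" for y
    using assms by (auto simp: nondeg_df_def)
  obtain y0 where y0: "0 < V y0" "V y0 < 1" using assms by (auto simp: nondeg_df_def)
  have "\<forall>\<epsilon>>0. \<exists>\<delta>>0. V (y0 + \<delta>) - V y0 < \<epsilon>"
    using rc[of y0] continuous_at_right_real_increasing[of V y0] mono by (auto simp: mono_def)
  then obtain d where d: "d > 0" "V (y0 + d) - V y0 < 1 - V y0"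
    using y0 by (meson diff_gt_0_iff_gt)
  obtain y1 where y1: "y0 < y1" "y1 < y0 + d" "isCont V y1"
    using mono_ex_isCont_between[OF mono, of y0 "y0 + d"] d by auto
  obtain y2 where y2: "y1 < y2" "y2 < y0 + d" "isCont V y2"
    using mono_ex_isCont_between[OF mono, of y1 "y0 + d"] y1 by auto
  have "V y0 \<le> V y1" "V y2 \<le> V (y0 + d)" using y1 y2 mono by (auto simp: mono_def)
  then show ?thesis using y1 y2 y0 d by (intro exI[of _ y1] exI[of _ y2]) auto
qed

section \<open>Convergence of types\<close>

lemma right_cont_eq_off_countable:
  fixes f g :: "real \<Rightarrow> 'a::t2_space"
  assumes f: "\<And>y. continuous (at_right y) f" and g: "\<And>y. continuous (at_right y) g"
    and S: "countable S" and eq: "\<And>x. x \<notin> S \<Longrightarrow> f x = g x"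
  shows "f y = g y"
proof -
  have "\<exists>x. x \<in> {y<..<y + 1 / Suc n} \<and> x \<notin> S" for n
    using real_interval_avoid_countable_set[OF _ S, of y "y + 1 / Suc n"] by auto
  then obtain x where "\<forall>n. x n \<in> {y<..<y + 1 / Suc n} \<and> x n \<notin> S"
    by metis
  then have x: "\<And>n. y < x n" "\<And>n. x n < y + 1 / Suc n" "\<And>n. x n \<notin> S"
    by auto
  have "x \<longlonglongrightarrow> y"
  proof (rule tendsto_sandwich[of "\<lambda>_. y" _ _ "\<lambda>n. y + 1 / Suc n"])
    show "(\<lambda>n. y + 1 / real (Suc n)) \<longlonglongrightarrow> y"
      using tendsto_add[OF tendsto_const LIMSEQ_Suc[OF lim_1_over_n]] by simp
  qed (use x in \<open>auto intro!: always_eventually less_imp_le\<close>)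
  moreover have "eventually (\<lambda>n. x n \<in> {y<..} \<and> x n \<noteq> y) sequentially"
    using x(1) by (auto intro!: always_eventually)
  ultimately have x_right: "filterlim x (at_right y) sequentially"
    by (simp add: filterlim_at)
  have "(\<lambda>n. f (x n)) \<longlonglongrightarrow> f y" "(\<lambda>n. g (x n)) \<longlonglongrightarrow> g y"
    using f[of y] g[of y] by (auto simp: continuous_within intro: filterlim_compose[OF _ x_right])
  moreover have "(\<lambda>n. f (x n)) = (\<lambda>n. g (x n))" using eq x(3) by auto
  ultimately show ?thesis using LIMSEQ_unique by metis
qed

lemma right_cont_compose_affine:
  fixes U :: "real \<Rightarrow> 'a::topological_space"
  assumes "\<And>z. continuous (at_right z) U" "A > 0"
  shows "continuous (at_right y) (\<lambda>y. U (A * y + B))"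
proof (rule continuous_within_compose2[where f="\<lambda>y. A * y + B"])
  show "continuous (at_right y) (\<lambda>y. A * y + B)" by (intro continuous_intros)
  have "(\<lambda>y. A * y + B) ` {y<..} \<subseteq> {A * y + B<..}" using assms(2) by auto
  then show "continuous (at (A * y + B) within (\<lambda>y. A * y + B) ` {y<..}) U"
    using assms(1) by (rule continuous_within_subset[rotated])
qed

lemma eventually_less_of_mono_tendsto:
  fixes W :: "nat \<Rightarrow> real \<Rightarrow> real"
  assumes "\<And>n. mono (W n)" "(\<lambda>n. W n (x n)) \<longlonglongrightarrow> a" "(\<lambda>n. W n (y n)) \<longlonglongrightarrow> b" "a < b"
  shows "eventually (\<lambda>n. x n < y n) sequentially"
proof -
  have "eventually (\<lambda>n. W n (x n) < (a + b) / 2) sequentially"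
    using assms(2,4) by (intro order_tendstoD) auto
  moreover have "eventually (\<lambda>n. (a + b) / 2 < W n (y n)) sequentially"
    using assms(3,4) by (intro order_tendstoD) auto
  ultimately show ?thesis
    by eventually_elim (meson assms(1) monoD not_le order.strict_trans)
qed

context
  fixes W :: "nat \<Rightarrow> real \<Rightarrow> real" and U V :: "real \<Rightarrow> real" and c e :: "nat \<Rightarrow> real"
  assumes W: "\<And>n. mono (W n)" and U: "nondeg_df U" and V: "nondeg_df V"
    and HU: "\<And>u. isCont U u \<Longrightarrow> (\<lambda>n. W n u) \<longlonglongrightarrow> U u"
    and HV: "\<And>y. isCont V y \<Longrightarrow> (\<lambda>n. W n (c n * y + e n)) \<longlonglongrightarrow> V y"
begin

lemma convergence_of_types_bounded:
  assumes c: "\<And>n. c n > 0"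
  shows "\<exists>c0>0. \<exists>C E. eventually (\<lambda>n. c0 \<le> c n \<and> c n \<le> C \<and> \<bar>e n\<bar> \<le> E) sequentially"
proof -
  obtain y1 y2 where y: "y1 < y2" "isCont V y1" "isCont V y2" "0 < V y1" "V y2 < 1"
    using nondeg_df_two_isCont_points[OF V] by blast
  obtain u1 u2 where u: "u1 < u2" "isCont U u1" "isCont U u2" "0 < U u1" "U u2 < 1"
    using nondeg_df_two_isCont_points[OF U] by blast
  obtain m1 where m1: "isCont U m1" "U m1 < V y1" using nondeg_df_isCont_below[OF U y(4)] by blast
  obtain M2 where M2: "isCont U M2" "V y2 < U M2" using nondeg_df_isCont_above[OF U y(5)] by blast
  obtain m1' where m1': "isCont V m1'" "V m1' < U u1" using nondeg_df_isCont_below[OF V u(4)] by blast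
  obtain M2' where M2': "isCont V M2'" "U u2 < V M2'" using nondeg_df_isCont_above[OF V u(5)] by blast
  have "eventually (\<lambda>n. m1 < c n * y1 + e n \<and> c n * y2 + e n < M2 \<and>
      c n * m1' + e n < u1 \<and> u2 < c n * M2' + e n) sequentially"
    using eventually_less_of_mono_tendsto[OF W HU[OF m1(1)] HV[OF y(2)] m1(2)]
      eventually_less_of_mono_tendsto[OF W HV[OF y(3)] HU[OF M2(1)] M2(2)]
      eventually_less_of_mono_tendsto[OF W HV[OF m1'(1)] HU[OF u(2)] m1'(2)]
      eventually_less_of_mono_tendsto[OF W HU[OF u(3)] HV[OF M2'(1)] M2'(2)]
    by eventually_elim blast
  then obtain N where N: "\<And>n. n \<ge> N \<Longrightarrow> m1 < c n * y1 + e n \<and> c n * y2 + e n < M2 \<and>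
      c n * m1' + e n < u1 \<and> u2 < c n * M2' + e n"
    by (auto simp: eventually_sequentially)
  have "u2 - u1 < c N * (M2' - m1')" using N[of N] by (simp add: algebra_simps)
  then have "c N * (M2' - m1') > 0" using u(1) by linarith
  then have Mm: "M2' - m1' > 0" using c[of N] by (simp add: zero_less_mult_iff)
  define C where "C = (M2 - m1) / (y2 - y1)"
  define E where "E = \<bar>m1\<bar> + \<bar>M2\<bar> + C * (\<bar>y1\<bar> + \<bar>y2\<bar>)"
  have "(u2 - u1) / (M2' - m1') \<le> c n \<and> c n \<le> C \<and> \<bar>e n\<bar> \<le> E" if "n \<ge> N" for n
  proof -
    from N[OF that] have "u2 - u1 < c n * (M2' - m1')" "c n * (y2 - y1) < M2 - m1"
      by (simp_all add: algebra_simps)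
    then have cn: "(u2 - u1) / (M2' - m1') \<le> c n" "c n \<le> C"
      using Mm y(1) by (simp_all add: C_def field_simps)
    have "\<bar>c n * y1\<bar> \<le> C * \<bar>y1\<bar>" "\<bar>c n * y2\<bar> \<le> C * \<bar>y2\<bar>"
      using cn(2) c[of n] by (auto simp: abs_mult intro!: mult_right_mono)
    moreover have "m1 - c n * y1 < e n" "e n < M2 - c n * y2" using N[OF that] by auto
    ultimately have "\<bar>e n\<bar> \<le> E"
      unfolding E_def abs_le_iff distrib_left using abs_ge_self[of M2] abs_ge_minus_self[of m1]
      by linarith
    with cn show ?thesis by blast
  qed
  moreover have "(u2 - u1) / (M2' - m1') > 0" using u(1) Mm by simp
  ultimately show ?thesis unfolding eventually_sequentially by blast
qed

lemma convergence_of_types_limit: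
  assumes c: "c \<longlonglongrightarrow> A" and A: "A > 0" and e: "e \<longlonglongrightarrow> B"
  shows "V y = U (A * y + B)"
proof -
  have monoU: "mono U" and rcU: "\<And>z. continuous (at_right z) U"
    and monoV: "mono V" and rcV: "\<And>y. continuous (at_right y) V"
    using U V by (auto simp: nondeg_df_def)
  have lim: "(\<lambda>n. c n * y + e n) \<longlonglongrightarrow> A * y + B" for y
    by (intro tendsto_intros c e)
  have below: "U v \<le> V y" if "isCont V y" "isCont U v" "v < A * y + B" for v y
  proof (rule tendsto_le[OF trivial_limit_sequentially HV[OF that(1)] HU[OF that(2)]])
    show "eventually (\<lambda>n. W n v \<le> W n (c n * y + e n)) sequentially"
      using order_tendstoD(1)[OF lim that(3)] by eventually_elim (use W in \<open>auto simp: mono_def\<close>)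
  qed
  have above: "V y \<le> U v" if "isCont V y" "isCont U v" "A * y + B < v" for v y
  proof (rule tendsto_le[OF trivial_limit_sequentially HU[OF that(2)] HV[OF that(1)]])
    show "eventually (\<lambda>n. W n (c n * y + e n) \<le> W n v) sequentially"
      using order_tendstoD(2)[OF lim that(3)] by eventually_elim (use W in \<open>auto simp: mono_def\<close>)
  qed
  have at_cont: "V y = U (A * y + B)" if cV: "isCont V y" and cU: "isCont U (A * y + B)" for y
  proof -
    define z where "z = A * y + B"
    have "\<bar>V y - U z\<bar> \<le> \<epsilon>" if "\<epsilon> > 0" for \<epsilon>
    proof -
      obtain d where d: "d > 0" "\<And>x. dist x z < d \<Longrightarrow> dist (U x) (U z) < \<epsilon>"
        using cU \<open>\<epsilon> > 0\<close> unfolding continuous_at_eps_delta z_def by blast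
      obtain v1 where v1: "z - d < v1" "v1 < z" "isCont U v1"
        using mono_ex_isCont_between[OF monoU, of "z - d" z] d by auto
      obtain v2 where v2: "z < v2" "v2 < z + d" "isCont U v2"
        using mono_ex_isCont_between[OF monoU, of z "z + d"] d by auto
      have "U v1 \<le> V y" "V y \<le> U v2"
        using below[OF cV v1(3)] above[OF cV v2(3)] v1 v2 by (auto simp: z_def)
      moreover have "\<bar>U v1 - U z\<bar> < \<epsilon>" "\<bar>U v2 - U z\<bar> < \<epsilon>"
        using d(2)[of v1] d(2)[of v2] v1 v2 by (auto simp: dist_real_def)
      ultimately show ?thesis by linarith
    qed
    then show ?thesis using dense_eq0_I[of "V y - U z"] by (simp add: z_def)
  qed
  define S where "S = {y. \<not> isCont V y} \<union> {y. A * y + B \<in> {u. \<not> isCont U u}}"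
  have "inj (\<lambda>y. A * y + B)" using A by (simp add: inj_on_def)
  then have "countable {y. A * y + B \<in> {u. \<not> isCont U u}}"
    by (rule countable_image_inj[OF mono_ctble_discont[OF monoU]])
  then have "countable S" unfolding S_def using mono_ctble_discont[OF monoV] by blast
  then show ?thesis
  proof (rule right_cont_eq_off_countable[OF rcV right_cont_compose_affine[OF rcU A]])
    show "V x = U (A * x + B)" if "x \<notin> S" for x
      using that at_cont by (simp add: S_def)
  qed
qed

end

text \<open>Khinchin's convergence of types theorem, with the normalisation of the first limit
  absorbed into \<open>W\<close>.\<close>
lemma convergence_of_types:
  fixes W :: "nat \<Rightarrow> real \<Rightarrow> real"
  assumes W: "\<And>n. mono (W n)" and U: "nondeg_df U" and V: "nondeg_df V" and c: "\<And>n. c n > 0"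
    and HU: "\<And>u. isCont U u \<Longrightarrow> (\<lambda>n. W n u) \<longlonglongrightarrow> U u"
    and HV: "\<And>y. isCont V y \<Longrightarrow> (\<lambda>n. W n (c n * y + e n)) \<longlonglongrightarrow> V y"
  shows "\<exists>A>0. \<exists>B. \<forall>y. V y = U (A * y + B)"
proof -
  obtain c0 C E N where c0: "c0 > 0"
    and N: "\<And>n. n \<ge> N \<Longrightarrow> c0 \<le> c n \<and> c n \<le> C \<and> \<bar>e n\<bar> \<le> E"
    using convergence_of_types_bounded[OF W U V HU HV c] unfolding eventually_sequentially by blast
  have "(\<lambda>k. (c (k + N), e (k + N))) k \<in> {c0..C} \<times> {-E..E}" for k
    using N[of "k + N"] by auto
  moreover have "seq_compact ({c0..C} \<times> {-E..E})"
    by (intro compact_imp_seq_compact compact_Times compact_Icc)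
  ultimately obtain l r where l: "l \<in> {c0..C} \<times> {-E..E}" and r: "strict_mono r"
    and lim_l: "((\<lambda>k. (c (k + N), e (k + N))) \<circ> r) \<longlonglongrightarrow> l"
    unfolding seq_compact_def by meson
  obtain A B where AB: "(A, B) \<in> {c0..C} \<times> {-E..E}"
    and lim: "((\<lambda>k. (c (k + N), e (k + N))) \<circ> r) \<longlonglongrightarrow> (A, B)"
    using l lim_l by (cases l) auto
  define s where "s k = r k + N" for k
  have s: "strict_mono s" using r by (simp add: strict_mono_def s_def)
  have "(\<lambda>k. c (s k)) \<longlonglongrightarrow> A" "(\<lambda>k. e (s k)) \<longlonglongrightarrow> B"
    using tendsto_fst[OF lim] tendsto_snd[OF lim] by (simp_all add: s_def o_def)
  moreover have "(\<lambda>k. W (s k) u) \<longlonglongrightarrow> U u" if "isCont U u" for u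
    using LIMSEQ_subseq_LIMSEQ[OF HU[OF that] s] by (simp add: o_def)
  moreover have "(\<lambda>k. W (s k) (c (s k) * y + e (s k))) \<longlonglongrightarrow> V y" if "isCont V y" for y
    using LIMSEQ_subseq_LIMSEQ[OF HV[OF that] s] by (simp add: o_def)
  moreover have "A > 0" using AB c0 by auto
  ultimately have "V y = U (A * y + B)" for y
    using convergence_of_types_limit[of "\<lambda>k. W (s k)" U V "c \<circ> s" "e \<circ> s" A B y] W U V
    by (simp add: o_def)
  then show ?thesis using \<open>A > 0\<close> by blast
qed

section \<open>Max-stability\<close>

lemma power_eq_powr_power_ratio:
  fixes x :: real
  assumes "x \<ge> 0"
  shows "x ^ Suc m = (x ^ Suc n) powr (real (Suc m) / real (Suc n))"
proof (cases "x = 0")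
  case False
  then have x: "x > 0" using assms by simp
  have "(x ^ Suc n) powr (real (Suc m) / real (Suc n))
      = (x powr real (Suc n)) powr (real (Suc m) / real (Suc n))"
    using x by (simp only: powr_realpow)
  also have "\<dots> = x powr real (Suc m)" by (simp add: powr_powr)
  also have "\<dots> = x ^ Suc m" using x by (rule powr_realpow)
  finally show ?thesis by (rule sym)
qed simp

lemma ex_nat_seq_ratio_tendsto:
  fixes t :: real
  assumes t: "t > 0"
  obtains k :: "nat \<Rightarrow> nat" where "filterlim k at_top sequentially"
    and "(\<lambda>n. real (Suc (k n)) / real (Suc n)) \<longlonglongrightarrow> t"
proof
  define k where "k n = nat \<lceil>t * real (Suc n)\<rceil> - 1" for n
  have low: "t * real (Suc n) \<le> real (Suc (k n))" and up: "real (Suc (k n)) \<le> t * real (Suc n) + 1" for n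
  proof -
    have "0 < t * real (Suc n)" using t by simp
    then show "t * real (Suc n) \<le> real (Suc (k n))" "real (Suc (k n)) \<le> t * real (Suc n) + 1"
      unfolding k_def by linarith+
  qed
  show "filterlim k at_top sequentially"
    unfolding filterlim_at_top eventually_sequentially
  proof
    fix K :: nat
    obtain M :: nat where M: "real M \<ge> (real K + 1) / t" using real_arch_simple by blast
    have "K \<le> k n" if "M \<le> n" for n
    proof -
      have "real K + 1 \<le> t * real M" using M t by (simp add: field_simps)
      also have "\<dots> \<le> t * real (Suc n)" using that t by simp
      finally show ?thesis using low[of n] by linarith
    qed
    then show "\<exists>M. \<forall>n\<ge>M. K \<le> k n" by blast
  qed
  show "(\<lambda>n. real (Suc (k n)) / real (Suc n)) \<longlonglongrightarrow> t"
  proof (rule tendsto_sandwich[of "\<lambda>_. t" _ _ "\<lambda>n. t + 1 / real (Suc n)"])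
    show "eventually (\<lambda>n. t \<le> real (Suc (k n)) / real (Suc n)) sequentially"
      using low by (simp add: pos_le_divide_eq del: of_nat_Suc)
    show "eventually (\<lambda>n. real (Suc (k n)) / real (Suc n) \<le> t + 1 / real (Suc n)) sequentially"
      using up by (intro always_eventually allI) (simp add: field_simps del: of_nat_Suc)
    show "(\<lambda>n. t + 1 / real (Suc n)) \<longlonglongrightarrow> t"
      using tendsto_add[OF tendsto_const LIMSEQ_Suc[OF lim_1_over_n]] by simp
  qed simp
qed

lemma isCont_of_isCont_powr:
  fixes G :: "real \<Rightarrow> real"
  assumes "\<And>y. 0 \<le> G y" "t > 0" "isCont (\<lambda>y. G y powr t) y"
  shows "isCont G y"
proof -
  have "isCont (\<lambda>y. (G y powr t) powr (1 / t)) y"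
    using assms(3) unfolding continuous_at by (rule tendsto_powr'[OF _ tendsto_const]) (use assms(2) in auto)
  moreover have "(G y powr t) powr (1 / t) = G y" for y
    using assms(1,2) by (simp add: powr_powr)
  ultimately show ?thesis by simp
qed

text \<open>With \<open>k n + 1 \<approx> t (n + 1)\<close>, the maxima of \<open>k n + 1\<close> variables converge to \<open>G\<close> under the
  normalisation for \<open>k n\<close> and to \<open>G\<^sup>t\<close> under the normalisation for \<open>n\<close>.\<close>
lemma max_stable_cdf_powr_affine:
  assumes ms: "max_stable Z" and t: "t > 0"
  shows "\<exists>A>0. \<exists>B. \<forall>y. cdf Z y powr t = cdf Z (A * y + B)"
proof -
  obtain N a b where Z: "real_distribution Z" "nondegenerate Z" and N: "real_distribution N"
    and a: "\<And>n. a n > 0" and wc: "weak_conv_m (\<lambda>n. distr (PiM {..<Suc n} (\<lambda>_. N)) borel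
                 (\<lambda>x. a n * Max (x ` {..<Suc n}) - b n)) Z"
    using ms unfolding max_stable_def by blast
  interpret N: real_distribution N by fact
  define G where "G = cdf Z"
  define F where "F = cdf N"
  have G: "nondeg_df G" unfolding G_def by (rule nondeg_df_cdf[OF Z])
  have H: "(\<lambda>n. F ((y + b n) / a n) ^ Suc n) \<longlonglongrightarrow> G y" if "isCont G y" for y
    using wc that unfolding weak_conv_m_def weak_conv_def G_def F_def
    by (simp add: cdf_affine_Max_PiM[OF N a])
  obtain k where k: "filterlim k at_top sequentially"
    and ratio: "(\<lambda>n. real (Suc (k n)) / real (Suc n)) \<longlonglongrightarrow> t"
    using ex_nat_seq_ratio_tendsto[OF t] by blast
  define W where "W n x = F ((x + b (k n)) / a (k n)) ^ Suc (k n)" for n x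
  define c where "c n = a (k n) / a n" for n
  define e where "e n = a (k n) * b n / a n - b (k n)" for n
  have "mono (W n)" for n
  proof (rule monoI)
    fix x y :: real
    assume "x \<le> y"
    then have "(x + b (k n)) / a (k n) \<le> (y + b (k n)) / a (k n)"
      using a[of "k n"] by (simp add: divide_right_mono)
    then show "W n x \<le> W n y"
      unfolding W_def F_def by (intro power_mono N.cdf_nondecreasing N.cdf_nonneg)
  qed
  moreover have "c n > 0" for n using a by (simp add: c_def)
  moreover have "(\<lambda>n. W n u) \<longlonglongrightarrow> G u" if "isCont G u" for u
    using filterlim_compose[OF H[OF that] k] by (simp add: W_def)
  moreover have "(\<lambda>n. W n (c n * y + e n)) \<longlonglongrightarrow> G y powr t" if "isCont (\<lambda>y. G y powr t) y" for y
  proof -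
    have "isCont G y" using isCont_of_isCont_powr[OF _ t that] nondeg_df_bounds(1)[OF G] .
    then have "(\<lambda>n. (F ((y + b n) / a n) ^ Suc n) powr (real (Suc (k n)) / real (Suc n)))
        \<longlonglongrightarrow> G y powr t"
      using t by (intro tendsto_powr' H ratio) (auto simp: F_def N.cdf_nonneg)
    moreover have "W n (c n * y + e n)
        = (F ((y + b n) / a n) ^ Suc n) powr (real (Suc (k n)) / real (Suc n))" for n
    proof -
      have "(c n * y + e n + b (k n)) / a (k n) = (y + b n) / a n"
        using a[of n] a[of "k n"] by (simp add: c_def e_def field_simps)
      then show ?thesis
        unfolding W_def F_def by (simp only: power_eq_powr_power_ratio[OF N.cdf_nonneg])
    qed
    ultimately show ?thesis by simp
  qed
  ultimately show ?thesis
    unfolding G_def[symmetric] by (rule convergence_of_types[OF _ G nondeg_df_powr[OF G t]])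
qed

section \<open>A tail bound from membership in \<open>D\<^sup>-\<close>\<close>

lemma measure_greaterThan_cdf:
  assumes "real_distribution Z"
  shows "measure Z {u<..} = 1 - cdf Z u"
proof -
  interpret Z: real_distribution Z by fact
  have "{u<..} = UNIV - {..u}" by auto
  then show ?thesis using Z.prob_compl[of "{..u}"] by (simp add: cdf_def)
qed

lemma measure_PiM_two_sum_gt:
  assumes Z: "real_distribution Z" and uw: "u + w \<le> 2 * t"
  shows "measure (PiM {..<2::nat} (\<lambda>_. Z)) {x \<in> space (PiM {..<2} (\<lambda>_. Z)). 2 * t < x 0 + x 1}
     \<le> 2 * (1 - cdf Z u) + (1 - cdf Z w)^2"
proof -
  interpret Z: real_distribution Z by fact
  let ?P = "PiM {..<2::nat} (\<lambda>_. Z)"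
  let ?box = "\<lambda>A. {x \<in> space ?P. \<forall>i\<in>{..<2}. x i \<in> A i}"
  interpret P: prob_space ?P by (rule prob_space_PiM) (simp add: Z.prob_space_axioms)
  define E1 where "E1 = ?box (\<lambda>i. if i = 0 then {u<..} else UNIV)"
  define E2 where "E2 = ?box (\<lambda>i. if i = 1 then {u<..} else UNIV)"
  define E3 where "E3 = ?box (\<lambda>_. {w<..})"
  have "{x \<in> space ?P. 2 * t < x 0 + x 1} \<subseteq> E1 \<union> E2 \<union> E3"
    using uw unfolding E1_def E2_def E3_def by (auto simp: lessThan_nat_numeral)
  moreover have ev: "E1 \<in> P.events" "E2 \<in> P.events" "E3 \<in> P.events"
    unfolding E1_def E2_def E3_def by (intro box_in_sets_PiM; simp)+
  ultimately have "P.prob {x \<in> space ?P. 2 * t < x 0 + x 1} \<le> P.prob (E1 \<union> E2 \<union> E3)"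
    by (intro P.finite_measure_mono) auto
  also have "\<dots> \<le> P.prob (E1 \<union> E2) + P.prob E3"
    using ev by (intro measure_subadditive) (auto simp: P.emeasure_eq_measure)
  also have "\<dots> \<le> P.prob E1 + P.prob E2 + P.prob E3"
    using ev measure_subadditive[of E1 ?P E2] by (auto simp: P.emeasure_eq_measure)
  also have "\<dots> = 2 * (1 - cdf Z u) + (1 - cdf Z w)^2"
  proof -
    note simps = Z.prob_space_axioms lessThan_nat_numeral measure_greaterThan_cdf[OF Z]
      Z.prob_space[unfolded Z.space_eq_univ] power2_eq_square
    have "P.prob E1 = 1 - cdf Z u" unfolding E1_def by (subst measure_PiM_box) (auto simp: simps)
    moreover have "P.prob E2 = 1 - cdf Z u" unfolding E2_def by (subst measure_PiM_box) (auto simp: simps)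
    moreover have "P.prob E3 = (1 - cdf Z w)^2" unfolding E3_def by (subst measure_PiM_box) (auto simp: simps)
    ultimately show ?thesis by simp
  qed
  finally show ?thesis .
qed

text \<open>The bound expresses that \<open>X\<^sub>1 + X\<^sub>2 > 2t\<close> forces \<open>X\<^sub>1 > u\<close>, \<open>X\<^sub>2 > u\<close>, or both
  \<open>X\<^sub>i > w\<close>, and \<open>D\<^sup>-\<close> with weights \<open>1/2, 1/2\<close> bounds \<open>P(X\<^sub>1 > t)\<close> by \<open>P(X\<^sub>1 + X\<^sub>2 > 2t)\<close>.\<close>
definition half_sum_tail_bound :: "(real \<Rightarrow> real) \<Rightarrow> bool" where
  "half_sum_tail_bound G \<longleftrightarrow>
     (\<forall>t u w. u + w \<le> 2 * t \<longrightarrow> 1 - G t \<le> 2 * (1 - G u) + (1 - G w)^2)"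

lemma half_sum_tail_boundD:
  "half_sum_tail_bound G \<Longrightarrow> u + w \<le> 2 * t \<Longrightarrow> 1 - G t \<le> 2 * (1 - G u) + (1 - G w)^2"
  unfolding half_sum_tail_bound_def by blast

lemma D_minus_half_sum_tail_bound:
  assumes Z: "real_distribution Z" and D: "D_minus Z"
  shows "half_sum_tail_bound (cdf Z)"
  unfolding half_sum_tail_bound_def
proof (intro allI impI)
  fix t u w :: real
  assume uw: "u + w \<le> 2 * t"
  interpret Z: real_distribution Z by fact
  let ?P = "PiM {..<2::nat} (\<lambda>_. Z)"
  let ?f = "\<lambda>x. \<Sum>i<2::nat. (\<lambda>_. 1/2::real) i * x i"
  interpret P: prob_space ?P by (rule prob_space_PiM) (simp add: Z.prob_space_axioms)
  have fm: "?f \<in> borel_measurable ?P" by measurable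
  have "stoch_le Z (distr ?P borel ?f)"
    using D unfolding D_minus_def by (elim allE[of _ 2] allE[of _ "\<lambda>_. 1/2"]) auto
  then have "P.prob {x \<in> space ?P. ?f x \<le> t} \<le> cdf Z t"
    unfolding stoch_le_def cdf_def using fm by (simp add: measure_distr vimage_def Int_def conj_commute)
  moreover have "P.prob {x \<in> space ?P. ?f x \<le> t} = 1 - P.prob {x \<in> space ?P. 2 * t < x 0 + x 1}"
  proof -
    have "{x \<in> space ?P. 2 * t < x 0 + x 1} = space ?P - {x \<in> space ?P. ?f x \<le> t}"
      by (auto simp: lessThan_nat_numeral)
    moreover have "{x \<in> space ?P. ?f x \<le> t} \<in> P.events" using fm by measurable
    ultimately show ?thesis by (simp add: P.prob_compl)
  qed
  ultimately show "1 - cdf Z t \<le> 2 * (1 - cdf Z u) + (1 - cdf Z w)^2"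
    using measure_PiM_two_sum_gt[OF Z uw] by linarith
qed

section \<open>The equation \<open>G (A y + B) = G(y)\<^sup>2\<close>\<close>

lemma funpow_square_eq:
  fixes G :: "real \<Rightarrow> real"
  assumes "\<And>y. G (h y) = G y ^ 2"
  shows "G ((h ^^ j) y) = G y ^ (2 ^ j)"
  by (induction j) (simp_all add: assms power_mult[symmetric] mult.commute)

lemma funpow_affine: "((\<lambda>y. p + A * (y - p)) ^^ j) y = p + A ^ j * (y - p)"
  for p A y :: real
  by (induction j) (simp_all only: funpow.simps comp_apply, simp_all add: algebra_simps)

lemma funpow_shift: "((\<lambda>y. y - \<beta>) ^^ j) y = y - real j * \<beta>"
  for y \<beta> :: real
  by (induction j) (simp_all only: funpow.simps comp_apply, simp_all add: algebra_simps)

lemma one_minus_power_le: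
  fixes x :: real
  assumes "0 \<le> x"
  shows "1 - x ^ n \<le> real n * (1 - x)"
  using Bernoulli_inequality[of "x - 1" n] assms by (simp add: algebra_simps)

lemma nondeg_df_square_iterate_lt_1:
  assumes G: "nondeg_df G" and eq: "\<And>y. G (h y) = G y ^ 2"
    and "(h ^^ j) y \<le> y1" "G y1 < 1"
  shows "G y < 1"
proof (rule ccontr)
  assume "\<not> G y < 1"
  then have "1 \<le> G y ^ (2 ^ j)" by (simp add: one_le_power)
  also have "\<dots> = G ((h ^^ j) y)" using funpow_square_eq[of G h, OF eq] by simp
  also have "\<dots> \<le> G y1" using assms(3) G by (auto simp: nondeg_df_def mono_def)
  finally show False using assms(4) by simp
qed

lemma nondeg_df_square_ge_imp_01:
  assumes "nondeg_df G" "G y \<le> G y ^ 2"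
  shows "G y = 0 \<or> G y = 1"
proof -
  have "0 \<le> G y * (G y - 1)" using assms(2) by (simp add: power2_eq_square algebra_simps)
  moreover have "G y * (G y - 1) \<le> 0"
    using nondeg_df_bounds[OF assms(1), of y] by (simp add: mult_nonneg_nonpos)
  ultimately show ?thesis by auto
qed

lemma nondeg_df_square_affine_cases:
  assumes G: "nondeg_df G" and A: "A > 0" and eq: "\<And>y. G (A * y + B) = G y ^ 2"
  obtains (shift) "A = 1" "B < 0"
    | (contract) p where "A < 1" "G p = 0" "\<And>y. G (p + A * (y - p)) = G y ^ 2"
    | (expand) p where "A > 1" "G p = 1" "\<And>y. G (p + A * (y - p)) = G y ^ 2"
proof -
  have mono: "mono G" using G by (simp add: nondeg_df_def)
  have dich: "G y = 0 \<or> G y = 1" if "y \<le> A * y + B" for y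
    using nondeg_df_square_ge_imp_01[OF G] eq[of y] monoD[OF mono that] by simp
  show thesis
  proof (cases "A = 1")
    case True
    then have "B < 0"
      using nondeg_df_not_01[OF G] dich by (metis add.commute le_add_same_cancel2 mult_1 not_le)
    with True show thesis by (rule shift)
  next
    case False
    define p where "p = B / (1 - A)"
    have "p * (1 - A) = B" using False by (simp add: p_def)
    then have aff: "A * y + B = p + A * (y - p)" for y by (simp add: algebra_simps)
    then have eq': "G (p + A * (y - p)) = G y ^ 2" for y using eq by simp
    have "G p = 0 \<or> G p = 1" using dich[of p] aff[of p] by simp
    moreover have "G p = 0 \<Longrightarrow> A > 1 \<Longrightarrow> False"
    proof (rule nondeg_df_not_01[OF G])
      fix y assume "G p = 0" "A > 1"
      show "G y = 0 \<or> G y = 1"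
      proof (cases "p < y")
        case True
        then have "0 \<le> (A - 1) * (y - p)" using \<open>A > 1\<close> by simp
        then show ?thesis using dich[of y] aff[of y] by (simp add: algebra_simps)
      next
        case False
        then show ?thesis using monoD[OF mono, of y p] nondeg_df_bounds(1)[OF G, of y] \<open>G p = 0\<close> by simp
      qed
    qed
    moreover have "G p = 1 \<Longrightarrow> A < 1 \<Longrightarrow> False"
    proof (rule nondeg_df_not_01[OF G])
      fix y assume "G p = 1" "A < 1"
      show "G y = 0 \<or> G y = 1"
      proof (cases "y < p")
        case True
        then have "0 \<le> (1 - A) * (p - y)" using \<open>A < 1\<close> by simp
        then show ?thesis using dich[of y] aff[of y] by (simp add: algebra_simps)
      next
        case False
        then show ?thesis using monoD[OF mono, of p y] nondeg_df_bounds(2)[OF G, of y] \<open>G p = 1\<close> by simp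
      qed
    qed
    ultimately show thesis using contract[OF _ _ eq'] expand[OF _ _ eq'] False by fastforce
  qed
qed

lemma one_minus_le_of_square_ge:
  fixes g :: real
  assumes "0 \<le> g" "g \<le> 1" "1/4 \<le> g^2"
  shows "1 - g \<le> 2/3 * (1 - g^2)"
proof -
  have "1/2 \<le> g"
  proof (rule ccontr)
    assume "\<not> 1/2 \<le> g"
    then have "g^2 < (1/2)^2" using assms(1) by (intro power_strict_mono) auto
    then show False using assms(3) by (simp add: power2_eq_square)
  qed
  then have "(1 - g) * (3/2) \<le> (1 - g) * (1 + g)" using assms(2) by (intro mult_left_mono) auto
  then show ?thesis by (simp add: power2_eq_square field_simps)
qed

text \<open>Gumbel type: \<open>1 - G\<close> decays geometrically to the right but at most doubles per step to the
  left, which the tail bound with \<open>u = t + 2\<beta>\<close>, \<open>w = t - 2\<beta>\<close> rules out far out in the tail.\<close>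
lemma shift_square_violates_half_sum_tail_bound:
  assumes G: "nondeg_df G" and K: "half_sum_tail_bound G" and \<beta>: "\<beta> > 0"
    and eq: "\<And>y. G (y - \<beta>) = G y ^ 2"
  shows False
proof -
  have mono: "mono G" and top: "(G \<longlongrightarrow> 1) at_top" using G by (auto simp: nondeg_df_def)
  note G01 = nondeg_df_bounds[OF G]
  define q where "q y = 1 - G y" for y
  have q_pos: "q y > 0" for y
  proof -
    obtain y1 where "G y1 < 1" using G by (auto simp: nondeg_df_def)
    obtain j :: nat where "real j \<ge> (y - y1) / \<beta>" using real_arch_simple by blast
    then have "((\<lambda>y. y - \<beta>) ^^ j) y \<le> y1" using \<beta> by (simp add: funpow_shift field_simps)
    then show ?thesis
      using nondeg_df_square_iterate_lt_1[OF G, of "\<lambda>y. y - \<beta>", OF eq] \<open>G y1 < 1\<close> by (simp add: q_def)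
  qed
  have q_left: "q (y - 2 * \<beta>) \<le> 4 * q y" for y
    using funpow_square_eq[of G "\<lambda>y. y - \<beta>", OF eq, of 2 y] one_minus_power_le[OF G01(1), of y 4]
    by (simp add: q_def funpow_shift)
  have q_right: "q (y + \<beta>) \<le> 2/3 * q y" if "G y \<ge> 1/4" for y
    using one_minus_le_of_square_ge[of "G (y + \<beta>)"] G01[of "y + \<beta>"] eq[of "y + \<beta>"] that
    by (simp add: q_def)
  obtain t where t: "G t \<ge> 1/4" "q t < 1/1000"
  proof -
    obtain t where "\<And>x. x \<ge> t \<Longrightarrow> G x > 1 - 1/1000"
      using order_tendstoD(1)[OF top, of "1 - 1/1000"] by (auto simp: eventually_at_top_linorder)
    then have "G t > 1 - 1/1000" by simp
    then show thesis by (intro that[of t]) (auto simp: q_def)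
  qed
  have "G (t + \<beta>) \<ge> 1/4" using t(1) monoD[OF mono, of t "t + \<beta>"] \<beta> by simp
  then have "q (t + 2 * \<beta>) \<le> 4/9 * q t"
    using q_right[OF t(1)] q_right[of "t + \<beta>"] by (simp add: algebra_simps)
  moreover have "q t \<le> 2 * q (t + 2 * \<beta>) + q (t - 2 * \<beta>) ^ 2"
    using half_sum_tail_boundD[OF K, of "t + 2 * \<beta>" "t - 2 * \<beta>" t] by (simp add: q_def)
  moreover have "q (t - 2 * \<beta>) ^ 2 \<le> (4 * q t) ^ 2"
    using q_left[of t] q_pos[of "t - 2 * \<beta>"] by (intro power_mono) auto
  ultimately have "q t \<le> 8/9 * q t + 16 * q t * q t" by (simp add: power2_eq_square)
  moreover have "16 * q t * q t < 16 * q t * (1/1000)" using t(2) q_pos[of t] by simp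
  ultimately show False using q_pos[of t] by linarith
qed

lemma expand_square_near_1_below:
  assumes G: "nondeg_df G" and A: "A > 1" and eq: "\<And>y. G (p + A * (y - p)) = G y ^ 2"
    and Gp: "G p = 1" and c: "0 \<le> c" "c < 1"
  shows "\<exists>y<p. c < G y"
proof (rule ccontr)
  assume below: "\<not> ?thesis"
  obtain y0 where y0: "0 < G y0" "G y0 < 1" using G by (auto simp: nondeg_df_def)
  have "y0 < p"
    using y0 Gp G monoD[of G p y0] by (force simp: nondeg_df_def)
  obtain n where n: "c ^ n < G y0" using real_arch_pow_inv[OF y0(1) c(2)] by blast
  define y where "y = p + (y0 - p) / A ^ n"
  have "y < p" using \<open>y0 < p\<close> A by (simp add: y_def field_simps)
  have "G y0 = G y ^ (2 ^ n)"
    using funpow_square_eq[of G "\<lambda>y. p + A * (y - p)", OF eq, of n y] A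
    by (simp add: funpow_affine y_def)
  also have "\<dots> \<le> c ^ (2 ^ n)"
    using below \<open>y < p\<close> nondeg_df_bounds(1)[OF G, of y] by (intro power_mono) auto
  also have "\<dots> \<le> c ^ n" using c by (intro power_decreasing less_imp_le[OF less_exp]) auto
  finally show False using n by simp
qed

text \<open>Weibull type: with \<open>u = p\<close> the tail bound reads \<open>1 - G y \<le> (1 - G (2 y - p))\<^sup>2\<close>, whereas
  iterating the equation shows that \<open>1 - G\<close> grows at most by the factor \<open>2\<^sup>k\<close> when the distance
  to \<open>p\<close> is multiplied by \<open>A\<^sup>k > 2\<close>.\<close>
lemma expand_square_violates_half_sum_tail_bound:
  assumes G: "nondeg_df G" and K: "half_sum_tail_bound G" and A: "A > 1"
    and eq: "\<And>y. G (p + A * (y - p)) = G y ^ 2" and Gp: "G p = 1"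
  shows False
proof -
  note G01 = nondeg_df_bounds[OF G]
  define q where "q y = 1 - G y" for y
  have q_pos: "q y > 0" if "y < p" for y
  proof -
    obtain y1 where "G y1 < 1" using G by (auto simp: nondeg_df_def)
    have "(p - y1) / (p - y) > 0 \<or> (p - y1) / (p - y) \<le> 0" by linarith
    then obtain j where "(p - y1) / (p - y) < A ^ j" using real_arch_pow[OF A] by fastforce
    then have "((\<lambda>y. p + A * (y - p)) ^^ j) y \<le> y1"
      using that unfolding funpow_affine by (simp add: field_simps)
    then show ?thesis
      using nondeg_df_square_iterate_lt_1[OF G, of "\<lambda>y. p + A * (y - p)", OF eq] \<open>G y1 < 1\<close>
      by (simp add: q_def)
  qed
  have q_left: "q (p - A ^ j * s) \<le> 2 ^ j * q (p - s)" for j s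
    using funpow_square_eq[of G "\<lambda>y. p + A * (y - p)", OF eq, of j "p - s"]
      one_minus_power_le[OF G01(1), of "p - s" "2 ^ j"]
    by (simp add: q_def funpow_affine)
  obtain k where k: "2 < A ^ k" using real_arch_pow[OF A] by blast
  obtain y1 where y1: "y1 < p" "G y1 > 1 - 1 / 4 ^ k"
    using expand_square_near_1_below[OF G A eq Gp, of "1 - 1 / 4 ^ k"] by auto
  define s where "s = p - y1"
  have "q y1 \<le> 2 * q p + q (2 * y1 - p) ^ 2"
    using half_sum_tail_boundD[OF K, of p "2 * y1 - p" y1] by (simp add: q_def)
  also have "\<dots> = q (p - 2 * s) ^ 2" using Gp by (simp add: q_def s_def algebra_simps)
  also have "\<dots> \<le> (2 ^ k * q y1) ^ 2"
  proof (rule power_mono)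
    have "2 * s \<le> A ^ k * s" using k y1(1) by (intro mult_right_mono) (auto simp: s_def)
    then have "p - A ^ k * s \<le> p - 2 * s" by simp
    then have "q (p - 2 * s) \<le> q (p - A ^ k * s)"
      using G by (auto simp: q_def nondeg_df_def mono_def)
    also have "\<dots> \<le> 2 ^ k * q y1" using q_left[of k s] by (simp add: s_def)
    finally show "q (p - 2 * s) \<le> 2 ^ k * q y1" .
    show "0 \<le> q (p - 2 * s)" using G01(2) by (simp add: q_def)
  qed
  also have "\<dots> = 4 ^ k * q y1 * q y1" by (simp add: power2_eq_square power_mult_distrib[symmetric])
  finally have "1 \<le> 4 ^ k * q y1" using q_pos[OF y1(1)] by simp
  moreover have "4 ^ k * q y1 < 1" using y1(2) by (simp add: q_def field_simps)
  ultimately show False by linarith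
qed

section \<open>Frechet laws\<close>

lemma antimono_periodic_const:
  fixes V :: "real \<Rightarrow> real"
  assumes anti: "antimono V" and per: "\<And>x. V (x + \<delta>) = V x" and "\<delta> \<noteq> 0"
  shows "V x = V y"
proof -
  have per_abs: "V (x + \<bar>\<delta>\<bar>) = V x" for x
    using per[of x] per[of "x - \<delta>"] by (cases "\<delta> > 0") simp_all
  have per_mult: "V (x + real j * \<bar>\<delta>\<bar>) = V x" for x j
    by (induction j) (simp_all add: algebra_simps per_abs[of "x + real _ * \<bar>\<delta>\<bar>", simplified algebra_simps])
  have eq: "V w = V x" if "x \<le> w" for x w
  proof -
    obtain j :: nat where "real j \<ge> (w - x) / \<bar>\<delta>\<bar>" using real_arch_simple by blast
    then have "w \<le> x + real j * \<bar>\<delta>\<bar>" using \<open>\<delta> \<noteq> 0\<close> by (simp add: field_simps)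
    then show ?thesis
      using antimonoD[OF anti that] antimonoD[OF anti, of w "x + real j * \<bar>\<delta>\<bar>"] per_mult[of x j] by simp
  qed
  show ?thesis
    using eq[where x=x and w=y] eq[where x=y and w=x] by (cases "x \<le> y") auto
qed

lemma additive_antimono_linear:
  fixes g :: "real \<Rightarrow> real"
  assumes add: "\<And>x y. g (x + y) = g x + g y" and anti: "antimono g"
  shows "g c = c * g 1"
proof -
  have g0: "g 0 = 0" using add[of 0 0] by simp
  have gnat: "g (real n * x) = real n * g x" for n x
    by (induction n) (simp_all add: g0 add distrib_right)
  have gint: "g (of_int m) = of_int m * g 1" for m
  proof (cases "m \<ge> 0")
    case True
    then show ?thesis using gnat[of "nat m" 1] by simp
  next
    case False
    then have "g (of_int (- m)) = of_int (- m) * g 1" using gnat[of "nat (-m)" 1] by simp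
    moreover have "g (of_int (- m)) = - g (of_int m)" using add[of "of_int m" "- of_int m"] g0 by simp
    ultimately show ?thesis by simp
  qed
  have g1: "g 1 \<le> 0" using antimonoD[OF anti, of 0 1] g0 by simp
  have "\<bar>g c - c * g 1\<bar> \<le> \<epsilon>" if "\<epsilon> > 0" for \<epsilon>
  proof -
    obtain n :: nat where "max 1 (- g 1 / \<epsilon>) < real n" using reals_Archimedean2 by blast
    then have n: "- g 1 / \<epsilon> < real n" "n \<ge> 1" by simp_all
    define m where "m = \<lfloor>real n * c\<rfloor>"
    have m: "of_int m \<le> real n * c" "real n * c \<le> of_int m + 1" unfolding m_def by linarith+
    have "(of_int m + 1) * g 1 \<le> real n * g c" "real n * g c \<le> of_int m * g 1"
      using antimonoD[OF anti m(1)] antimonoD[OF anti m(2)] gint[of m] gint[of "m + 1"] gnat[of n c]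
      by simp_all
    moreover have "(of_int m + 1) * g 1 \<le> (real n * c) * g 1" "(real n * c) * g 1 \<le> of_int m * g 1"
      using m g1 by (auto intro: mult_right_mono_neg)
    ultimately have "\<bar>real n * (g c - c * g 1)\<bar> \<le> - g 1"
      unfolding abs_le_iff by (simp add: algebra_simps)
    then have "real n * \<bar>g c - c * g 1\<bar> \<le> - g 1" by (simp add: abs_mult)
    also have "- g 1 < real n * \<epsilon>" using n(1) \<open>\<epsilon> > 0\<close> by (simp add: field_simps)
    finally show ?thesis using n(2) by simp
  qed
  then show ?thesis using dense_eq0_I[of "g c - c * g 1"] by simp
qed

lemma antimono_shift_equation_linear:
  fixes V :: "real \<Rightarrow> real"
  assumes anti: "antimono V" and shift: "\<And>c. \<exists>d. \<forall>x. V (x + d) = V x + c"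
  shows "\<exists>\<alpha>>0. \<forall>x. V x = V 0 - \<alpha> * x"
proof -
  have "\<forall>c. \<exists>d. \<forall>x. V (x + d) = V x + c" using shift by blast
  then obtain g where "\<forall>c. \<forall>x. V (x + g c) = V x + c" by (rule choice[THEN exE])
  then have g: "V (x + g c) = V x + c" for c x by blast
  have add: "g (c + d) = g c + g d" for c d
  proof (rule ccontr)
    assume "g (c + d) \<noteq> g c + g d"
    then have "g c + g d - g (c + d) \<noteq> 0" by simp
    moreover have "V (x + (g c + g d - g (c + d))) = V x" for x
      using g[where c="c + d" and x="x + (g c + g d - g (c + d))"] g[where c=d and x="x + g c"]
        g[where c=c and x=x]
      by (simp add: algebra_simps)
    ultimately have "V (0 + g 1) = V 0" using antimono_periodic_const[OF anti] by blast
    then show False using g[where c=1 and x=0] by simp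
  qed
  have "antimono g"
  proof (rule antimonoI, rule ccontr)
    fix c d :: real
    assume "c \<le> d" "\<not> g d \<le> g c"
    then have "V (0 + g d) \<le> V (0 + g c)" by (intro antimonoD[OF anti]) auto
    then show False using g[where c=d and x=0] g[where c=c and x=0] \<open>c \<le> d\<close> \<open>\<not> g d \<le> g c\<close> by auto
  qed
  then have lin: "g c = c * g 1" for c
    using additive_antimono_linear[where g=g and c=c] add by blast
  have "g 1 \<noteq> 0" using g[where c=1 and x=0] lin[of 1] by auto
  moreover have "g 1 \<le> 0" using antimonoD[OF \<open>antimono g\<close>, of 0 1] lin[of 0] by simp
  ultimately have g1: "g 1 < 0" by simp
  have "V x = V 0 - (- 1 / g 1) * x" for x
    using g[where c="x / g 1" and x=0] lin[of "x / g 1"] g1 by simp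
  moreover have "- 1 / g 1 > 0" using g1 by simp
  ultimately show ?thesis by blast
qed

lemma power_law_of_scaling:
  fixes U :: "real \<Rightarrow> real"
  assumes pos: "\<And>s. s > 0 \<Longrightarrow> U s > 0"
    and anti: "\<And>s s'. 0 < s \<Longrightarrow> s \<le> s' \<Longrightarrow> U s' \<le> U s"
    and scale: "\<And>t. t > 0 \<Longrightarrow> \<exists>C>0. \<forall>s>0. U (C * s) = t * U s"
  shows "\<exists>K>0. \<exists>\<alpha>>0. \<forall>s>0. U s = K * s powr (- \<alpha>)"
proof -
  define V where "V x = ln (U (exp x))" for x
  have "antimono V"
  proof (rule antimonoI)
    fix x y :: real
    assume "x \<le> y"
    then have "U (exp y) \<le> U (exp x)" by (intro anti) auto
    then show "V y \<le> V x" using pos by (simp add: V_def)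
  qed
  moreover have "\<exists>d. \<forall>x. V (x + d) = V x + c" for c
  proof -
    obtain C where C: "C > 0" "\<And>s. s > 0 \<Longrightarrow> U (C * s) = exp c * U s"
      using scale[OF exp_gt_zero] by blast
    have "V (x + ln C) = V x + c" for x
    proof -
      have "exp (x + ln C) = C * exp x" using C(1) by (simp add: exp_add)
      then show ?thesis using C(2)[of "exp x"] pos[of "exp x"] by (simp add: V_def ln_mult)
    qed
    then show ?thesis by blast
  qed
  ultimately obtain \<alpha> where \<alpha>: "\<alpha> > 0" "\<And>x. V x = V 0 - \<alpha> * x"
    using antimono_shift_equation_linear by blast
  have "U s = exp (V 0) * s powr (- \<alpha>)" if "s > 0" for s
  proof -
    have "U s = exp (V (ln s))" using that pos[OF that] by (simp add: V_def)
    also have "\<dots> = exp (V 0) * exp (- \<alpha> * ln s)" by (simp add: \<alpha>(2)[of "ln s"] exp_diff exp_minus field_simps)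
    also have "exp (- \<alpha> * ln s) = s powr (- \<alpha>)" using that by (simp add: powr_def)
    finally show ?thesis .
  qed
  then show ?thesis using \<alpha>(1) exp_gt_zero by blast
qed

lemma contract_square_support:
  fixes G :: "real \<Rightarrow> real"
  assumes G: "nondeg_df G" and A: "0 < A" "A < 1"
    and eq: "\<And>y. G (p + A * (y - p)) = G y ^ 2" and Gp: "G p = 0"
  shows "y \<le> p \<Longrightarrow> G y = 0" and "p < y \<Longrightarrow> 0 < G y" and "p < y \<Longrightarrow> G y < 1"
proof -
  have mono: "mono G" using G by (simp add: nondeg_df_def)
  show zero: "G y = 0" if "y \<le> p" for y
    using monoD[OF mono that] Gp nondeg_df_bounds(1)[OF G, of y] by simp
  obtain y1 where y1: "0 < G y1" "G y1 < 1" using G by (auto simp: nondeg_df_def)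
  then have "p < y1" using zero[of y1] by (metis less_irrefl not_le)
  show "G y < 1" if "p < y"
  proof -
    have "0 < (y1 - p) / (y - p)" using \<open>p < y1\<close> that by simp
    then obtain j where "A ^ j < (y1 - p) / (y - p)" using real_arch_pow_inv A(2) by blast
    then have "((\<lambda>y. p + A * (y - p)) ^^ j) y \<le> y1"
      using that unfolding funpow_affine by (simp add: field_simps)
    then show ?thesis
      using nondeg_df_square_iterate_lt_1[OF G, of "\<lambda>y. p + A * (y - p)", OF eq] y1(2) by blast
  qed
  show "0 < G y" if "p < y"
  proof -
    have "1 < 1 / A" using A by simp
    then obtain j where "(y1 - p) / (y - p) < (1 / A) ^ j" using real_arch_pow by blast
    then have "y1 \<le> p + (y - p) / A ^ j"
      using that A by (simp add: field_simps)
    then have "0 < G (p + (y - p) / A ^ j)" using y1(1) monoD[OF mono] by (meson order.strict_trans2)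
    then have "0 < G (p + (y - p) / A ^ j) ^ (2 ^ j)" by simp
    also have "\<dots> = G y"
      using funpow_square_eq[of G "\<lambda>y. p + A * (y - p)", OF eq, of j "p + (y - p) / A ^ j"] A
      unfolding funpow_affine by simp
    finally show ?thesis .
  qed
qed

lemma powr_affine_fixes_endpoint:
  fixes G :: "real \<Rightarrow> real"
  assumes zero: "\<And>y. y \<le> p \<Longrightarrow> G y = 0" and pos: "\<And>y. p < y \<Longrightarrow> 0 < G y"
    and A: "A > 0" and eq: "\<And>y. G y powr t = G (A * y + B)"
  shows "A * p + B = p"
proof (rule order_antisym)
  show "A * p + B \<le> p"
    using pos[of "A * p + B"] eq[of p] zero[of p] by force
  show "p \<le> A * p + B"
  proof (rule ccontr)
    assume "\<not> p \<le> A * p + B"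
    define y where "y = p + (p - (A * p + B)) / (2 * A)"
    have "p < y" using \<open>\<not> p \<le> A * p + B\<close> A by (simp add: y_def)
    moreover have "A * y + B = (p + (A * p + B)) / 2" using A by (simp add: y_def field_simps)
    then have "A * y + B \<le> p" using \<open>\<not> p \<le> A * p + B\<close> by simp
    ultimately show False using pos[of y] zero[of "A * y + B"] eq[of y] by simp
  qed
qed

lemma contract_square_frechet:
  fixes G :: "real \<Rightarrow> real"
  assumes G: "nondeg_df G" and A: "0 < A" "A < 1"
    and eq: "\<And>y. G (p + A * (y - p)) = G y ^ 2" and Gp: "G p = 0"
    and pow: "\<And>t. t > 0 \<Longrightarrow> \<exists>A>0. \<exists>B. \<forall>y. G y powr t = G (A * y + B)"
  shows "\<exists>a>0. \<exists>\<alpha>>0. \<forall>x. G x = frechet_cdf \<alpha> ((x - p) / a)"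
proof -
  note supp = contract_square_support[OF G A eq Gp]
  define U where "U s = - ln (G (p + s))" for s
  have "\<exists>K>0. \<exists>\<alpha>>0. \<forall>s>0. U s = K * s powr (- \<alpha>)"
  proof (rule power_law_of_scaling)
    show "U s > 0" if "s > 0" for s
      using supp(2,3)[of "p + s"] that by (simp add: U_def)
    show "U s' \<le> U s" if "0 < s" "s \<le> s'" for s s'
      using supp(2)[of "p + s"] that monoD[of G "p + s" "p + s'"] G by (simp add: U_def nondeg_df_def)
    show "\<exists>C>0. \<forall>s>0. U (C * s) = t * U s" if t: "t > 0" for t
    proof -
      obtain C B where CB: "C > 0" "\<And>y. G y powr t = G (C * y + B)" using pow[OF t] by blast
      have "C * p + B = p"
        using supp(1,2) CB by (rule powr_affine_fixes_endpoint[where G=G and p=p])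
      then have "C * (p + s) + B = p + C * s" for s by (simp add: algebra_simps)
      then have "G (p + C * s) = G (p + s) powr t" for s using CB(2)[of "p + s"] by simp
      then have "U (C * s) = t * U s" if "s > 0" for s
        using supp(2)[of "p + s"] that by (simp add: U_def ln_powr)
      then show ?thesis using CB(1) by blast
    qed
  qed
  then obtain K \<alpha> where K: "K > 0" and \<alpha>: "\<alpha> > 0" and U: "\<And>s. s > 0 \<Longrightarrow> U s = K * s powr (- \<alpha>)"
    by blast
  define a where "a = K powr (1 / \<alpha>)"
  have a: "a > 0" using K by (simp add: a_def)
  have aK: "a powr \<alpha> = K" using K \<alpha> by (simp add: a_def powr_powr)
  have "G x = frechet_cdf \<alpha> ((x - p) / a)" for x
  proof (cases "p < x")
    case True
    have "((x - p) / a) powr (- \<alpha>) = a powr \<alpha> * (x - p) powr (- \<alpha>)"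
      using True a by (simp add: powr_divide powr_minus field_simps)
    also have "\<dots> = K * (x - p) powr (- \<alpha>)" by (simp add: aK)
    also have "\<dots> = U (x - p)" using U True by simp
    finally show ?thesis
      using True supp(2)[of x] a by (simp add: frechet_cdf_def U_def)
  next
    case False
    then have "(x - p) / a \<le> 0" using a by (simp add: divide_nonpos_pos)
    then show ?thesis using supp(1)[of x] False by (simp add: frechet_cdf_def)
  qed
  then show ?thesis using a \<alpha> by blast
qed

lemma one_minus_exp_neg_bounds:
  fixes v :: real
  assumes "v \<ge> 0"
  shows "v - v^2 \<le> 1 - exp (- v)" and "1 - exp (- v) \<le> v"
proof -
  have "exp (- v) \<le> 1 / (1 + v)"
    using exp_ge_add_one_self[of v] assms by (simp add: exp_minus field_simps)
  also have "\<dots> \<le> 1 - v + v^2"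
    using assms by (simp add: field_simps power2_eq_square)
  finally show "v - v^2 \<le> 1 - exp (- v)" by simp
  show "1 - exp (- v) \<le> v" using exp_minus_ge[of v] by simp
qed

text \<open>Far in the tail \<open>1 - G (b + c s) \<approx> c\<^sup>-\<^sup>\<alpha> v\<close>; for \<open>\<alpha> > 1\<close> pick \<open>l < 2\<close> with \<open>l\<^sup>\<alpha> > 2\<close>, then the
  tail bound with \<open>u = b + l s\<close>, \<open>w = b + (2 - l) s\<close> fails to first order in \<open>v\<close>.\<close>
lemma frechet_half_sum_tail_bound_imp_le_1:
  assumes a: "a > 0" and \<alpha>: "\<alpha> > 0"
    and K: "half_sum_tail_bound (\<lambda>x. frechet_cdf \<alpha> ((x - b) / a))"
  shows "\<alpha> \<le> 1"
proof (rule ccontr)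
  assume "\<not> \<alpha> \<le> 1"
  then have "2 powr (1 / \<alpha>) < 2 powr 1" by (intro powr_less_mono) auto
  then obtain l where l: "2 powr (1 / \<alpha>) < l" "l < 2" using dense by auto
  have l0: "0 < l" using l(1) powr_gt_zero[of 2 "1 / \<alpha>"] by linarith
  have "2 < l powr \<alpha>"
    using powr_less_mono2[OF \<alpha> _ l(1)] \<alpha> by (simp add: powr_powr)
  then have p: "l powr (- \<alpha>) < 1 / 2" using less_imp_inverse_less[of 2] by (simp add: powr_minus)
  define r where "r = (2 - l) powr (- \<alpha>)"
  define v where "v = (1 - 2 * l powr (- \<alpha>)) / (2 * (1 + r^2))"
  have v: "v > 0" using p by (simp add: v_def add_pos_nonneg)
  define s where "s = a * v powr (- 1 / \<alpha>)"
  have s: "s > 0" using a v by (simp add: s_def)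
  define q where "q c = 1 - frechet_cdf \<alpha> ((b + c * s - b) / a)" for c
  have q: "q c = 1 - exp (- (c powr (- \<alpha>) * v))" if "c > 0" for c
  proof -
    have "(c * s / a) powr (- \<alpha>) = c powr (- \<alpha>) * (v powr (- 1 / \<alpha>)) powr (- \<alpha>)"
      using that a v by (simp add: s_def powr_mult)
    then show ?thesis using that s a v \<alpha> by (simp add: q_def frechet_cdf_def powr_powr)
  qed
  have "q 1 \<le> 2 * q l + q (2 - l) ^ 2"
    using half_sum_tail_boundD[OF K, of "b + l * s" "b + (2 - l) * s" "b + 1 * s"]
    by (simp add: q_def algebra_simps)
  moreover have "v - v^2 \<le> q 1" using q[of 1] one_minus_exp_neg_bounds(1)[of v] v by simp
  moreover have "q l \<le> l powr (- \<alpha>) * v"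
    using q[OF l0] one_minus_exp_neg_bounds(2)[of "l powr (- \<alpha>) * v"] v by simp
  moreover have "q (2 - l) ^ 2 \<le> (r * v) ^ 2"
    using q[of "2 - l"] one_minus_exp_neg_bounds(2)[of "r * v"] l v
    by (intro power_mono) (simp_all add: r_def)
  ultimately have "v * (1 - v) \<le> v * (2 * l powr (- \<alpha>) + r^2 * v)"
    by (simp add: algebra_simps power2_eq_square)
  then have "1 - v \<le> 2 * l powr (- \<alpha>) + r^2 * v" using v by (simp only: mult_le_cancel_left_pos)
  then have "1 - 2 * l powr (- \<alpha>) \<le> v * (1 + r^2)" by (simp add: algebra_simps)
  also have "\<dots> = (1 - 2 * l powr (- \<alpha>)) / 2"
  proof -
    have "e / (2 * D) * D = e / 2" if "D \<noteq> 0" for e D :: real using that by simp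
    moreover have "1 + r^2 \<noteq> 0" using zero_le_power2[of r] by linarith
    ultimately show ?thesis by (simp only: v_def)
  qed
  finally show False using p by simp
qed

lemma measure_PiM_coord_null:
  assumes M: "prob_space M" and I: "finite I" "i \<in> I" and A: "A \<in> sets M" "measure M A = 0"
  shows "measure (PiM I (\<lambda>_. M)) {x \<in> space (PiM I (\<lambda>_. M)). x i \<in> A} = 0"
proof -
  have "{x \<in> space (PiM I (\<lambda>_. M)). x i \<in> A}
      = {x \<in> space (PiM I (\<lambda>_. M)). \<forall>j\<in>I. x j \<in> (if j = i then A else space M)}"
    using I(2) by (auto simp: space_PiM PiE_iff)
  also have "measure (PiM I (\<lambda>_. M)) \<dots> = (\<Prod>j\<in>I. measure M (if j = i then A else space M))"
    by (rule measure_PiM_box) (use M I A in auto)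
  also have "\<dots> = 0" using I A by (intro prod_zero) (auto intro!: bexI[of _ i])
  finally show ?thesis .
qed

lemma measure_PiM_some_coord_le_null:
  fixes n :: nat
  assumes Z: "real_distribution Z" and b: "cdf Z b = 0"
  shows "(\<Union>i<n. {x \<in> space (PiM {..<n} (\<lambda>_. Z)). x i \<in> {..b}}) \<in> sets (PiM {..<n} (\<lambda>_. Z))"
    and "measure (PiM {..<n} (\<lambda>_. Z)) (\<Union>i<n. {x \<in> space (PiM {..<n} (\<lambda>_. Z)). x i \<in> {..b}}) = 0"
proof -
  interpret Z: real_distribution Z by fact
  let ?P = "PiM {..<n} (\<lambda>_. Z)"
  interpret P: prob_space ?P by (rule prob_space_PiM) (simp add: Z.prob_space_axioms)
  have null: "P.prob {x \<in> space ?P. x i \<in> {..b}} = 0" if "i < n" for i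
    using that b by (intro measure_PiM_coord_null) (auto simp: Z.prob_space_axioms cdf_def)
  show "(\<Union>i<n. {x \<in> space ?P. x i \<in> {..b}}) \<in> P.events" by measurable
  have "P.prob (\<Union>i<n. {x \<in> space ?P. x i \<in> {..b}}) \<le> (\<Sum>i<n. P.prob {x \<in> space ?P. x i \<in> {..b}})"
    by (intro P.finite_measure_subadditive_finite) auto
  also have "\<dots> = 0" using null by simp
  finally show "P.prob (\<Union>i<n. {x \<in> space ?P. x i \<in> {..b}}) = 0"
    using measure_nonneg[of ?P "\<Union>i<n. {x \<in> space ?P. x i \<in> {..b}}"] by linarith
qed

lemma convex_combination_above:
  fixes \<theta> x :: "nat \<Rightarrow> real"
  assumes \<theta>: "\<And>i. i < n \<Longrightarrow> 0 \<le> \<theta> i" "(\<Sum>i<n. \<theta> i) = 1" and x: "\<And>i. i < n \<Longrightarrow> b < x i"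
  shows "b < (\<Sum>i<n. \<theta> i * x i)"
    and "i < n \<Longrightarrow> \<theta> i * (x i - b) \<le> (\<Sum>i<n. \<theta> i * x i) - b"
proof -
  have diff: "(\<Sum>i<n. \<theta> i * x i) - b = (\<Sum>i<n. \<theta> i * (x i - b))"
    using \<theta>(2) by (simp add: algebra_simps sum_subtractf sum_distrib_left[symmetric])
  have nonneg: "0 \<le> \<theta> i * (x i - b)" if "i < n" for i
    using \<theta>(1)[OF that] x[OF that] by simp
  have "\<exists>i<n. \<theta> i > 0"
  proof (rule ccontr)
    assume "\<not> ?thesis"
    then have "\<theta> i = 0" if "i < n" for i using \<theta>(1)[OF that] that by force
    then have "(\<Sum>i<n. \<theta> i) = 0" by simp
    with \<theta>(2) show False by simp
  qed
  then obtain i0 where i0: "i0 < n" "\<theta> i0 > 0" by blast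
  have "0 < (\<Sum>i<n. \<theta> i * (x i - b))"
    using nonneg i0 x[OF i0(1)] by (intro sum_pos2[of _ i0]) auto
  then show "b < (\<Sum>i<n. \<theta> i * x i)" using diff by simp
  show "\<theta> i * (x i - b) \<le> (\<Sum>i<n. \<theta> i * x i) - b" if "i < n"
    unfolding diff using nonneg that by (intro member_le_sum) auto
qed

lemma sum_le_sum_powr:
  fixes \<theta> :: "nat \<Rightarrow> real"
  assumes "\<And>i. i < n \<Longrightarrow> 0 \<le> \<theta> i \<and> \<theta> i \<le> 1" and "\<alpha> \<le> 1"
  shows "(\<Sum>i<n. \<theta> i) \<le> (\<Sum>i<n. \<theta> i powr \<alpha>)"
proof (rule sum_mono)
  fix i assume "i \<in> {..<n}"
  then have "0 \<le> \<theta> i" "\<theta> i \<le> 1" using assms(1) by auto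
  then show "\<theta> i \<le> \<theta> i powr \<alpha>"
    using powr_mono'[OF assms(2)] by (cases "\<theta> i = 0") auto
qed

lemma frechet_prob_PiM_box_le_cdf:
  fixes \<theta> :: "nat \<Rightarrow> real"
  assumes Z: "real_distribution Z" and a: "a > 0" and \<alpha>: "0 < \<alpha>" "\<alpha> \<le> 1"
    and F: "\<And>x. cdf Z x = frechet_cdf \<alpha> ((x - b) / a)"
    and \<theta>: "\<And>i. i < n \<Longrightarrow> 0 \<le> \<theta> i" "(\<Sum>i<n. \<theta> i) = 1" and t: "b < t"
  shows "measure (PiM {..<n} (\<lambda>_. Z)) {x \<in> space (PiM {..<n} (\<lambda>_. Z)).
      \<forall>i\<in>{..<n}. x i \<in> (if \<theta> i > 0 then {..b + (t - b) / \<theta> i} else UNIV)} \<le> cdf Z t"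
proof -
  interpret Z: real_distribution Z by fact
  define v where "v = ((t - b) / a) powr (- \<alpha>)"
  have box: "Z.prob (if \<theta> i > 0 then {..b + (t - b) / \<theta> i} else UNIV) = exp (- (\<theta> i powr \<alpha> * v))"
    if "i < n" for i
  proof (cases "\<theta> i > 0")
    case True
    have "((t - b) / \<theta> i / a) powr (- \<alpha>) = \<theta> i powr \<alpha> * v"
      using True a t by (simp add: v_def powr_divide powr_minus powr_mult field_simps)
    moreover have "0 < (t - b) / \<theta> i / a" using True a t by simp
    ultimately show ?thesis using True F[of "b + (t - b) / \<theta> i"] by (simp add: cdf_def frechet_cdf_def)
  next
    case False
    then have "\<theta> i = 0" using \<theta>(1)[OF that] by simp
    then show ?thesis using Z.prob_space by (simp add: Z.space_eq_univ)
  qed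
  have "measure (PiM {..<n} (\<lambda>_. Z)) {x \<in> space (PiM {..<n} (\<lambda>_. Z)).
      \<forall>i\<in>{..<n}. x i \<in> (if \<theta> i > 0 then {..b + (t - b) / \<theta> i} else UNIV)}
      = (\<Prod>i<n. Z.prob (if \<theta> i > 0 then {..b + (t - b) / \<theta> i} else UNIV))"
    by (rule measure_PiM_box) (auto simp: Z.prob_space_axioms)
  also have "\<dots> = (\<Prod>i<n. exp (- (\<theta> i powr \<alpha> * v)))" using box by simp
  also have "\<dots> = exp (- (v * (\<Sum>i<n. \<theta> i powr \<alpha>)))"
    by (simp add: exp_sum[symmetric] sum_negf sum_distrib_left mult.commute)
  also have "\<dots> \<le> exp (- v)"
  proof -
    have "\<theta> i \<le> 1" if "i < n" for i
      using member_le_sum[of i "{..<n}" \<theta>] \<theta> that by simp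
    then have "1 \<le> (\<Sum>i<n. \<theta> i powr \<alpha>)" using sum_le_sum_powr[OF _ \<alpha>(2), of n \<theta>] \<theta> by simp
    moreover have "0 < v" using a t by (simp add: v_def)
    ultimately show ?thesis by simp
  qed
  also have "exp (- v) = cdf Z t" using a t by (simp add: F frechet_cdf_def v_def)
  finally show ?thesis .
qed

lemma frechet_D_minus:
  assumes Z: "real_distribution Z" and a: "a > 0" and \<alpha>: "0 < \<alpha>" "\<alpha> \<le> 1"
    and F: "\<And>x. cdf Z x = frechet_cdf \<alpha> ((x - b) / a)"
  shows "D_minus Z"
  unfolding D_minus_def stoch_le_def
proof (intro allI impI)
  interpret Z: real_distribution Z by fact
  fix n :: nat and \<theta> :: "nat \<Rightarrow> real" and t :: real
  assume "(\<forall>i<n. 0 \<le> \<theta> i) \<and> (\<Sum>i<n. \<theta> i) = 1"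
  then have \<theta>0: "\<And>i. i < n \<Longrightarrow> 0 \<le> \<theta> i" and \<theta>1: "(\<Sum>i<n. \<theta> i) = 1" by auto
  let ?P = "PiM {..<n} (\<lambda>_. Z)" and ?f = "\<lambda>x. \<Sum>i<n. \<theta> i * x i"
  interpret P: prob_space ?P by (rule prob_space_PiM) (simp add: Z.prob_space_axioms)
  have "?f \<in> borel_measurable ?P" by measurable
  then have cdf_sum: "cdf (distr ?P borel ?f) t = P.prob {x \<in> space ?P. ?f x \<le> t}"
    unfolding cdf_def by (simp add: measure_distr vimage_def Int_def conj_commute)
  define N where "N = (\<Union>i<n. {x \<in> space ?P. x i \<in> {..b}})"
  have "cdf Z b = 0" by (simp add: F frechet_cdf_def)
  then have N: "N \<in> P.events" "P.prob N = 0"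
    unfolding N_def using measure_PiM_some_coord_le_null[OF Z] by auto
  have above: "b < ?f x" "i < n \<Longrightarrow> \<theta> i * (x i - b) \<le> ?f x - b" if "x \<in> space ?P" "x \<notin> N" for x i
    using that convex_combination_above[OF \<theta>0 \<theta>1, of b x] by (auto simp: N_def not_le)
  show "cdf (distr ?P borel ?f) t \<le> cdf Z t"
  proof (cases "b < t")
    case False
    have "{x \<in> space ?P. ?f x \<le> t} \<subseteq> N" using above(1) False by fastforce
    then have "P.prob {x \<in> space ?P. ?f x \<le> t} \<le> P.prob N" using N(1) by (rule P.finite_measure_mono)
    then show ?thesis using cdf_sum N(2) Z.cdf_nonneg[of t] by simp
  next
    case True
    define E where "E = {x \<in> space ?P. \<forall>i\<in>{..<n}.
        x i \<in> (if \<theta> i > 0 then {..b + (t - b) / \<theta> i} else UNIV)}"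
    have E: "E \<in> P.events" unfolding E_def by (intro box_in_sets_PiM) auto
    have "x \<in> E \<union> N" if x: "x \<in> space ?P" "?f x \<le> t" for x
    proof (cases "x \<in> N")
      case False
      have "\<theta> i * (x i - b) \<le> t - b" if "i < n" for i
        using above(2)[OF x(1) False that] x(2) by linarith
      then show ?thesis using x(1) by (auto simp: E_def field_simps)
    qed simp
    then have "P.prob {x \<in> space ?P. ?f x \<le> t} \<le> P.prob (E \<union> N)"
      using E N(1) by (intro P.finite_measure_mono) auto
    also have "\<dots> \<le> P.prob E + P.prob N"
      using E N(1) by (intro measure_subadditive) (auto simp: P.emeasure_eq_measure)
    also have "P.prob E \<le> cdf Z t"
      unfolding E_def by (rule frechet_prob_PiM_box_le_cdf[OF Z a \<alpha> F \<theta>0 \<theta>1 True])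
    finally show ?thesis using cdf_sum N(2) by simp
  qed
qed

theorem theorem5:
  fixes Z :: "real measure"
  assumes "max_stable Z"
  shows "D_minus Z \<longleftrightarrow>
    (\<exists>a b \<alpha>. a > 0 \<and> 0 < \<alpha> \<and> \<alpha> \<le> 1 \<and>
       (\<forall>x. cdf Z x = frechet_cdf \<alpha> ((x - b) / a)))"
proof
  have Z: "real_distribution Z" and G: "nondeg_df (cdf Z)"
    using assms nondeg_df_cdf by (auto simp: max_stable_def)
  note pow = max_stable_cdf_powr_affine[OF assms]
  assume "D_minus Z"
  then have K: "half_sum_tail_bound (cdf Z)" by (rule D_minus_half_sum_tail_bound[OF Z])
  obtain A B where A: "A > 0" and sq: "\<And>y. cdf Z (A * y + B) = cdf Z y ^ 2"
    using pow[of 2] nondeg_df_bounds(1)[OF G] by (force simp: powr_realpow')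
  show "\<exists>a b \<alpha>. a > 0 \<and> 0 < \<alpha> \<and> \<alpha> \<le> 1 \<and> (\<forall>x. cdf Z x = frechet_cdf \<alpha> ((x - b) / a))"
    using G A sq
  proof (cases rule: nondeg_df_square_affine_cases)
    case shift
    then show ?thesis using shift_square_violates_half_sum_tail_bound[OF G K, of "- B"] sq by simp
  next
    case (contract p)
    then obtain a \<alpha> where "a > 0" "\<alpha> > 0" and F: "\<forall>x. cdf Z x = frechet_cdf \<alpha> ((x - p) / a)"
      using contract_square_frechet[OF G A contract(1) contract(3,2) pow] by blast
    moreover from F have "cdf Z = (\<lambda>x. frechet_cdf \<alpha> ((x - p) / a))" by auto
    then have "\<alpha> \<le> 1" using frechet_half_sum_tail_bound_imp_le_1[OF \<open>a > 0\<close> \<open>\<alpha> > 0\<close>] K by simp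
    ultimately show ?thesis by blast
  qed (use expand_square_violates_half_sum_tail_bound[OF G K] in blast)
next
  assume "\<exists>a b \<alpha>. a > 0 \<and> 0 < \<alpha> \<and> \<alpha> \<le> 1 \<and> (\<forall>x. cdf Z x = frechet_cdf \<alpha> ((x - b) / a))"
  then show "D_minus Z" using frechet_D_minus assms by (auto simp: max_stable_def)
qed

end
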